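(* Let $\mathcal{G}\subseteq C(\mathbb{R},\mathbb{R})$. The following conditions are equivalent: (1) $\mathcal{K}_\mathcal{G}=\{\mathrm{CL}(E):E\in\mathrm{CL}(\mathbb{R})\}$; (2) there exist $f,h\in C(\mathbb{R},\mathbb{R}^* )$ such that $f\le h$, $f^{-1}[\mathbb{R}]\cup h^{-1}[\mathbb{R}]=\mathbb{R}$, and $\mathcal{G}=[f,h]$.
   Context: $\mathbb{R}^*=\mathbb{R}\cup\{-\infty,\infty\}$ with its usual order topology; $C(\mathbb{R},\mathbb{R}^* )$ is the set of continuous functions $\mathbb{R}\to\mathbb{R}^*$; $f\le g$ means $f(x)\le g(x)$ for all $x$; $[f,h]=\{g\in C(\mathbb{R},\mathbb{R}):f\le g\le h\}$. For a closed set $E\subseteq\mathbb{R}$, $\mathrm{CL}(E)$ denotes the family of all closed subsets of $E$. For $\mathcal{G}\subseteq C(\mathbb{R},\mathbb{R})$ let $R_\mathcal{G}=\{(f,E)\in C(\mathbb{R},\mathbb{R})\times\mathrm{CL}(\mathbb{R}):(\exists g\in\mathcal{G})\, f\restriction E=g\restriction E\}$; for $\mathcal{F}\subseteq C(\mathbb{R},\mathbb{R})$ put $E_\mathcal{G}(\mathcal{F})=\{E\in\mathrm{CL}(\mathbb{R}):(\forall f\in\mathcal{F})\,(f,E)\in R_\mathcal{G}\}$, and let $\mathcal{K}_\mathcal{G}=\{E_\mathcal{G}(\mathcal{F}):\mathcal{F}\subseteq C(\mathbb{R},\mathbb{R})\}$. *)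

theory Defs
  imports "HOL-Analysis.Analysis"
begin

text \<open>C(R,R): continuous real functions. R* is modelled by ereal (order topology).\<close>
definition CRR :: "(real \<Rightarrow> real) set" where
  "CRR = {g. continuous_on UNIV g}"

definition CL :: "real set \<Rightarrow> real set set" where
  "CL E = {A. closed A \<and> A \<subseteq> E}"

definition interval_fun :: "(real \<Rightarrow> ereal) \<Rightarrow> (real \<Rightarrow> ereal) \<Rightarrow> (real \<Rightarrow> real) set" where
  "interval_fun f h = {g. continuous_on UNIV g \<and> (\<forall>x. f x \<le> ereal (g x) \<and> ereal (g x) \<le> h x)}"

definition R_rel :: "(real \<Rightarrow> real) set \<Rightarrow> ((real \<Rightarrow> real) \<times> real set) set" where
  "R_rel G = {(f, E). f \<in> CRR \<and> E \<in> CL UNIV \<and> (\<exists>g\<in>G. \<forall>x\<in>E. f x = g x)}"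

definition E_of :: "(real \<Rightarrow> real) set \<Rightarrow> (real \<Rightarrow> real) set \<Rightarrow> real set set" where
  "E_of G F = {E \<in> CL UNIV. \<forall>f\<in>F. (f, E) \<in> R_rel G}"

definition K_of :: "(real \<Rightarrow> real) set \<Rightarrow> real set set set" where
  "K_of G = {E_of G F | F. F \<subseteq> CRR}"

end

theory Submission
  imports Defs
begin

text \<open>For continuous \<open>\<phi>\<close> let \<open>Z(\<phi>)\<close> be the set of points where \<open>\<phi>\<close> meets some member of \<open>G\<close>.
  Testing \<open>E\<^sub>G({\<phi>})\<close> on singletons shows that (1) makes every \<open>Z(\<phi>)\<close> closed and matched by a
  single member of \<open>G\<close>; conversely, under these two properties \<open>E\<^sub>G(F) = CL(\<Inter>\<phi>\<in>F. Z(\<phi>))\<close>,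
  so that (1) holds as soon as the sets \<open>Z(\<phi>)\<close> separate points from closed sets.

  For \<open>G = [f,h]\<close> the clamp \<open>max f (min h \<phi>)\<close> matches \<open>\<phi>\<close> on \<open>Z(\<phi>) = {f \<le> \<phi> \<le> h}\<close>, and an
  Urysohn bump pushing a member of \<open>G\<close> outside \<open>[f x, h x]\<close> separates \<open>x\<close> from a closed set.

  Conversely, the member of \<open>G\<close> matching a secant between two members of \<open>G\<close> crosses every
  intermediate level, and level sets are closed, so at each point the values of \<open>G\<close> form an
  interval. Hence the pointwise infimum and supremum of \<open>G\<close> are continuous and attained where
  finite, and every continuous function between them has \<open>Z(\<phi>) = \<real>\<close>, i.e. belongs to \<open>G\<close>.
  Applying (1) to \<open>E = \<emptyset>\<close> shows that \<open>G\<close> omits a value at every point, so the two envelopes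
  are never infinite at the same point.\<close>

definition coincidence_set :: "(real \<Rightarrow> real) set \<Rightarrow> (real \<Rightarrow> real) \<Rightarrow> real set" where
  "coincidence_set G \<phi> = {y. \<exists>g\<in>G. g y = \<phi> y}"

lemma coincidence_setI: "g \<in> G \<Longrightarrow> g y = \<phi> y \<Longrightarrow> y \<in> coincidence_set G \<phi>"
  unfolding coincidence_set_def by blast

lemma coincidence_setE:
  assumes "y \<in> coincidence_set G \<phi>"
  obtains g where "g \<in> G" "g y = \<phi> y"
  using assms unfolding coincidence_set_def by blast

lemma mem_E_of_iff:
  assumes "F \<subseteq> CRR"
  shows "E \<in> E_of G F \<longleftrightarrow> closed E \<and> (\<forall>\<phi>\<in>F. \<exists>g\<in>G. \<forall>x\<in>E. \<phi> x = g x)"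
  using assms unfolding E_of_def R_rel_def CL_def by auto

lemma continuous_on_real_of_ereal:
  fixes F :: "real \<Rightarrow> ereal"
  assumes "continuous_on UNIV F" "\<And>y. \<bar>F y\<bar> \<noteq> \<infinity>"
  shows "continuous_on UNIV (\<lambda>y. real_of_ereal (F y))"
  using continuous_on_iff_real[of UNIV F] assms by (simp add: o_def)

locale coincidence_closed =
  fixes G :: "(real \<Rightarrow> real) set"
  assumes continuous_members: "G \<subseteq> CRR"
    and closed_coincidence_set: "\<phi> \<in> CRR \<Longrightarrow> closed (coincidence_set G \<phi>)"
    and coincidence_witness: "\<phi> \<in> CRR \<Longrightarrow> \<exists>g\<in>G. \<forall>y\<in>coincidence_set G \<phi>. g y = \<phi> y"
begin

lemma agrees_on_iff_subset_coincidence_set: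
  assumes "\<phi> \<in> CRR"
  shows "(\<exists>g\<in>G. \<forall>x\<in>E. \<phi> x = g x) \<longleftrightarrow> E \<subseteq> coincidence_set G \<phi>"
  using coincidence_witness[OF assms] by (metis coincidence_setI subsetI subset_iff)

lemma E_of_eq:
  assumes "F \<subseteq> CRR"
  shows "E_of G F = CL (\<Inter>\<phi>\<in>F. coincidence_set G \<phi>)"
proof -
  have "(\<forall>\<phi>\<in>F. \<exists>g\<in>G. \<forall>x\<in>E. \<phi> x = g x) \<longleftrightarrow> (\<forall>\<phi>\<in>F. E \<subseteq> coincidence_set G \<phi>)" for E
    using assms agrees_on_iff_subset_coincidence_set by blast
  then show ?thesis
    unfolding set_eq_iff mem_E_of_iff[OF assms] by (simp add: CL_def) blast
qed

lemma K_of_eq_closed_sets: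
  assumes separating: "\<And>E x. closed E \<Longrightarrow> x \<notin> E \<Longrightarrow>
      \<exists>\<phi>\<in>CRR. E \<subseteq> coincidence_set G \<phi> \<and> x \<notin> coincidence_set G \<phi>"
  shows "K_of G = {CL E | E. E \<in> CL UNIV}"
proof (intro set_eqI iffI)
  fix X assume "X \<in> K_of G"
  then obtain F where F: "F \<subseteq> CRR" "X = E_of G F"
    by (auto simp: K_of_def)
  moreover have "closed (\<Inter>\<phi>\<in>F. coincidence_set G \<phi>)"
    using F(1) closed_coincidence_set by blast
  ultimately show "X \<in> {CL E | E. E \<in> CL UNIV}"
    by (auto simp: E_of_eq CL_def)
next
  fix X assume "X \<in> {CL E | E. E \<in> CL UNIV}"
  then obtain E where E: "closed E" "X = CL E"
    by (auto simp: CL_def)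
  define F where "F = {\<phi> \<in> CRR. E \<subseteq> coincidence_set G \<phi>}"
  have "(\<Inter>\<phi>\<in>F. coincidence_set G \<phi>) = E"
    using separating[OF E(1)] unfolding F_def by blast
  then have "X = E_of G F"
    using E(2) E_of_eq[of F] unfolding F_def by auto
  then show "X \<in> K_of G"
    unfolding K_of_def F_def by blast
qed

end

lemma coincidence_closed_if_K_of_eq:
  assumes "G \<subseteq> CRR" and K: "K_of G = {CL E | E. E \<in> CL UNIV}"
  shows "coincidence_closed G"
proof
  fix \<phi> assume \<phi>: "\<phi> \<in> CRR"
  have "E_of G {\<phi>} \<in> K_of G"
    using \<phi> unfolding K_of_def by blast
  with K obtain E where E: "closed E" "E_of G {\<phi>} = CL E"
    by (auto simp: CL_def)
  have mem: "A \<in> E_of G {\<phi>} \<longleftrightarrow> closed A \<and> (\<exists>g\<in>G. \<forall>x\<in>A. \<phi> x = g x)" for A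
    using mem_E_of_iff[of "{\<phi>}"] \<phi> by simp
  have "y \<in> E \<longleftrightarrow> {y} \<in> E_of G {\<phi>}" for y
    using E(2) by (simp add: CL_def)
  then have E_eq: "E = coincidence_set G \<phi>"
    unfolding mem coincidence_set_def by (auto simp: eq_commute)
  then show "closed (coincidence_set G \<phi>)"
    using E(1) by simp
  have "E \<in> E_of G {\<phi>}"
    using E by (simp add: CL_def)
  then show "\<exists>g\<in>G. \<forall>y\<in>coincidence_set G \<phi>. g y = \<phi> y"
    unfolding mem E_eq by auto
qed (use assms in simp)

lemma K_of_eq_omits_value:
  assumes K: "K_of G = {CL E | E. E \<in> CL UNIV}"
  shows "\<exists>t. \<forall>g\<in>G. g x \<noteq> t"
proof (rule ccontr)
  assume "\<not> ?thesis"
  then have all_values: "\<exists>g\<in>G. g x = t" for t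
    by blast
  have "CL {} \<in> K_of G"
    using K by (auto simp: CL_def)
  then obtain F where F: "F \<subseteq> CRR" "CL {} = E_of G F"
    by (auto simp: K_of_def)
  have "{x} \<in> E_of G F"
    using F(1) by (simp add: mem_E_of_iff) (metis all_values)
  then have "{x} \<in> CL {}"
    using F(2) by simp
  then show False
    by (simp add: CL_def)
qed

definition upper_envelope :: "(real \<Rightarrow> real) set \<Rightarrow> real \<Rightarrow> ereal" where
  "upper_envelope G x = (SUP g\<in>G. ereal (g x))"

definition lower_envelope :: "(real \<Rightarrow> real) set \<Rightarrow> real \<Rightarrow> ereal" where
  "lower_envelope G x = (INF g\<in>G. ereal (g x))"

lemma lower_envelope_eq_uminus_upper_envelope:
  "lower_envelope G x = - upper_envelope (uminus ` G) x"
proof -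
  have "(SUP g\<in>G. - ereal (g x)) = - lower_envelope G x"
    unfolding lower_envelope_def by (rule ereal_SUP_uminus_eq)
  moreover have "upper_envelope (uminus ` G) x = (SUP g\<in>G. - ereal (g x))"
    by (simp add: upper_envelope_def image_comp o_def)
  ultimately show ?thesis
    by simp
qed

lemma coincidence_set_uminus: "coincidence_set (uminus ` G) \<phi> = coincidence_set G (- \<phi>)"
proof (intro set_eqI iffI)
  fix y assume "y \<in> coincidence_set (uminus ` G) \<phi>"
  then obtain g where "g \<in> G" "(- g) y = \<phi> y"
    by (auto elim: coincidence_setE)
  then show "y \<in> coincidence_set G (- \<phi>)"
    by (intro coincidence_setI[of g]) auto
next
  fix y assume "y \<in> coincidence_set G (- \<phi>)"
  then obtain g where "g \<in> G" "g y = - \<phi> y"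
    by (auto elim: coincidence_setE)
  then show "y \<in> coincidence_set (uminus ` G) \<phi>"
    by (intro coincidence_setI[of "- g"]) auto
qed

context coincidence_closed
begin

lemma nonempty: "G \<noteq> {}"
  using coincidence_witness[of "\<lambda>_. 0"] by (auto simp: CRR_def)

lemma member_tendsto:
  assumes "g \<in> G"
  shows "(g \<longlongrightarrow> g x) (at x within A)"
proof -
  have "isCont g x"
    using assms continuous_members by (auto simp: CRR_def continuous_on_eq_continuous_at)
  then show ?thesis
    by (simp add: continuous_at_imp_continuous_at_within flip: continuous_within)
qed

lemma attains_intermediate_value:
  assumes g1: "g1 \<in> G" "g1 x < c" and g2: "g2 \<in> G" "c < g2 x"
  shows "\<exists>g\<in>G. g x = c"
proof (rule ccontr)
  let ?S = "coincidence_set G (\<lambda>_. c)"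
  assume "\<not> ?thesis"
  text \<open>Then \<open>c\<close> is omitted on a whole ball around \<open>x\<close>, yet the member of \<open>G\<close> matching the
    secant from \<open>(x, g1 x)\<close> to a nearby \<open>(q, g2 q)\<close> has to cross the level \<open>c\<close> in between.\<close>
  then have "x \<in> - ?S"
    by (auto elim: coincidence_setE)
  moreover have "open (- ?S)"
    using closed_coincidence_set[of "\<lambda>_. c"] by (auto simp: CRR_def)
  ultimately obtain \<delta> where \<delta>: "\<delta> > 0" "ball x \<delta> \<subseteq> - ?S"
    by (meson openE)
  have "\<forall>\<^sub>F q in at_right x. q < x + \<delta>"
    by (rule order_tendstoD(2)[OF tendsto_ident_at]) (use \<delta>(1) in simp)
  then have "\<forall>\<^sub>F q in at_right x. x < q \<and> q < x + \<delta> \<and> c < g2 q"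
    using eventually_at_right_less[of x] order_tendstoD(1)[OF member_tendsto[OF g2(1)] g2(2)]
    by eventually_elim auto
  then obtain q where q: "x < q" "q < x + \<delta>" "c < g2 q"
    using eventually_happens' trivial_limit_at_right_real by blast
  define \<phi> where "\<phi> y = g1 x + (g2 q - g1 x) * (y - x) / (q - x)" for y
  have "\<phi> \<in> CRR"
    unfolding \<phi>_def CRR_def using q(1) by (auto intro!: continuous_intros)
  then obtain g where g: "g \<in> G" "\<forall>y\<in>coincidence_set G \<phi>. g y = \<phi> y"
    using coincidence_witness by blast
  have "x \<in> coincidence_set G \<phi>"
    by (rule coincidence_setI[OF g1(1)]) (simp add: \<phi>_def)
  moreover have "q \<in> coincidence_set G \<phi>"
    by (rule coincidence_setI[OF g2(1)]) (use q(1) in \<open>simp add: \<phi>_def\<close>)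
  ultimately have "g x = g1 x" "g q = g2 q"
    using g(2) q(1) by (auto simp: \<phi>_def)
  moreover have "continuous_on {x..q} g"
    using g(1) continuous_members by (auto simp: CRR_def intro: continuous_on_subset)
  ultimately obtain z where z: "x \<le> z" "z \<le> q" "g z = c"
    using IVT'[of g x c q] g1(2) q by auto
  then have "z \<in> ball x \<delta>"
    using q(2) by (auto simp: dist_real_def)
  moreover have "z \<in> ?S"
    using coincidence_setI[OF g(1)] z(3) by simp
  ultimately show False
    using \<delta>(2) by blast
qed

lemma upper_envelope_ge: "g \<in> G \<Longrightarrow> ereal (g x) \<le> upper_envelope G x"
  unfolding upper_envelope_def by (rule SUP_upper)

lemma less_upper_envelope_iff: "l < upper_envelope G x \<longleftrightarrow> (\<exists>g\<in>G. l < ereal (g x))"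
  unfolding upper_envelope_def by (simp add: less_SUP_iff)

lemma eventually_upper_envelope_le:
  assumes hx: "upper_envelope G x < ereal c"
  shows "\<forall>\<^sub>F y in at x. upper_envelope G y \<le> ereal c"
proof -
  obtain g0 where g0: "g0 \<in> G"
    using nonempty by blast
  have "ereal (g0 x) < ereal c"
    using upper_envelope_ge[OF g0, of x] hx by (rule le_less_trans)
  then have below: "\<forall>\<^sub>F y in at x. g0 y < c"
    using order_tendstoD(2)[OF member_tendsto[OF g0]] by simp
  have "x \<notin> coincidence_set G (\<lambda>_. c)"
  proof
    assume "x \<in> coincidence_set G (\<lambda>_. c)"
    then have "ereal c \<le> upper_envelope G x"
      using upper_envelope_ge by (metis coincidence_setE)
    with hx show False
      by simp
  qed
  moreover have "closed (coincidence_set G (\<lambda>_. c))"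
    using closed_coincidence_set by (simp add: CRR_def)
  ultimately have avoid: "\<forall>\<^sub>F y in at x. y \<in> - coincidence_set G (\<lambda>_. c)"
    by (intro eventually_at_in_open') auto
  from below avoid show ?thesis
  proof eventually_elim
    case (elim y)
    show ?case
      unfolding upper_envelope_def
    proof (rule SUP_least)
      fix g assume "g \<in> G"
      then show "ereal (g y) \<le> ereal c"
        using attains_intermediate_value[OF g0 elim(1), of g] elim(2)
        by (force intro: coincidence_setI)
    qed
  qed
qed

lemma continuous_upper_envelope: "continuous_on UNIV (upper_envelope G)"
  unfolding continuous_on_def
proof
  fix x
  let ?h = "upper_envelope G"
  show "(?h \<longlongrightarrow> ?h x) (at x within UNIV)"
  proof (rule order_tendstoI)
    fix l assume "l < ?h x"
    then obtain g where g: "g \<in> G" "l < ereal (g x)"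
      by (auto simp: less_upper_envelope_iff)
    have "\<forall>\<^sub>F y in at x. l < ereal (g y)"
      using order_tendstoD(1)[OF tendsto_ereal[OF member_tendsto[OF g(1)]] g(2)] .
    then show "\<forall>\<^sub>F y in at x within UNIV. l < ?h y"
      by eventually_elim (use g(1) upper_envelope_ge in \<open>blast intro: less_le_trans\<close>)
  next
    fix u assume "?h x < u"
    then obtain c where c: "?h x < ereal c" "ereal c < u"
      using ereal_dense2 by blast
    from eventually_upper_envelope_le[OF c(1)] show "\<forall>\<^sub>F y in at x within UNIV. ?h y < u"
      by eventually_elim (use c(2) in auto)
  qed
qed

lemma exists_below_upper_envelope_touching_at:
  assumes hx: "upper_envelope G x = ereal c"
  obtains \<phi> where "\<phi> \<in> CRR" "\<phi> x = c" "\<And>y. y \<noteq> x \<Longrightarrow> ereal (\<phi> y) < upper_envelope G y"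
proof -
  let ?h = "upper_envelope G"
  obtain g0 where g0: "g0 \<in> G"
    using nonempty by blast
  define \<psi> where "\<psi> y = real_of_ereal (min (?h y) (ereal (c + 1)))" for y
  have \<psi>_finite: "\<bar>min (?h y) (ereal (c + 1))\<bar> \<noteq> \<infinity>" for y
    using upper_envelope_ge[OF g0, of y] by (cases "?h y") (auto simp: min_def)
  then have \<psi>_eq: "ereal (\<psi> y) = min (?h y) (ereal (c + 1))" for y
    by (simp add: \<psi>_def ereal_real')
  have "continuous_on UNIV \<psi>"
    unfolding \<psi>_def using \<psi>_finite
    by (intro continuous_on_real_of_ereal continuous_on_min continuous_upper_envelope) auto
  then have "(\<lambda>y. min c (\<psi> y - \<bar>y - x\<bar>)) \<in> CRR"
    unfolding CRR_def by (auto intro!: continuous_intros)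
  moreover have "min c (\<psi> x - \<bar>x - x\<bar>) = c"
    using \<psi>_eq[of x] hx by simp
  moreover have "ereal (min c (\<psi> y - \<bar>y - x\<bar>)) < ?h y" if "y \<noteq> x" for y
  proof -
    have "min c (\<psi> y - \<bar>y - x\<bar>) < \<psi> y"
      using that by simp
    then have "ereal (min c (\<psi> y - \<bar>y - x\<bar>)) < ereal (\<psi> y)"
      by (simp only: less_ereal.simps)
    also have "\<dots> \<le> ?h y"
      using \<psi>_eq[of y] by simp
    finally show ?thesis .
  qed
  ultimately show ?thesis
    using that by blast
qed

lemma upper_envelope_attained:
  assumes hx: "upper_envelope G x = ereal c"
  shows "\<exists>g\<in>G. g x = c"
proof (rule ccontr)
  assume not_attained: "\<not> ?thesis"
  obtain g0 where g0: "g0 \<in> G"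
    using nonempty by blast
  have "g0 x \<le> c"
    using upper_envelope_ge[OF g0, of x] hx by simp
  with g0 not_attained have g0_below: "g0 x < c"
    by force
  obtain \<phi> where \<phi>: "\<phi> \<in> CRR" "\<phi> x = c" "\<And>y. y \<noteq> x \<Longrightarrow> ereal (\<phi> y) < upper_envelope G y"
    using exists_below_upper_envelope_touching_at[OF hx] by blast
  text \<open>Near \<open>x\<close> the function \<open>\<phi>\<close> lies strictly between \<open>g0\<close> and the envelope, so it is
    attained off \<open>x\<close>; closedness of its coincidence set then forces it to be attained at \<open>x\<close>.\<close>
  have "((\<lambda>y. \<phi> y - g0 y) \<longlongrightarrow> \<phi> x - g0 x) (at x)"
    using \<phi>(1) member_tendsto[OF g0]
    by (intro tendsto_diff) (auto simp: CRR_def continuous_on_def)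
  then have "\<forall>\<^sub>F y in at x. 0 < \<phi> y - g0 y"
    by (rule order_tendstoD(1)) (use \<phi>(2) g0_below in simp)
  then have "\<forall>\<^sub>F y in at x. y \<in> coincidence_set G \<phi>"
    using eventually_neq_at_within[of x x UNIV]
  proof eventually_elim
    case (elim y)
    obtain g where "g \<in> G" "\<phi> y < g y"
      using \<phi>(3)[OF elim(2)] by (auto simp: less_upper_envelope_iff)
    then show ?case
      using attains_intermediate_value[OF g0, of y "\<phi> y" g] elim(1)
      by (auto intro: coincidence_setI)
  qed
  then have "x \<in> coincidence_set G \<phi>"
    using closed_coincidence_set[OF \<phi>(1)]
    by (intro Lim_in_closed_set[OF _ _ at_neq_bot tendsto_ident_at])
  then show False
    using \<phi>(2) not_attained by (auto elim: coincidence_setE)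
qed

lemma coincidence_closed_uminus: "coincidence_closed (uminus ` G)"
proof
  show "uminus ` G \<subseteq> CRR"
    using continuous_members by (auto simp: CRR_def subset_iff intro!: continuous_on_minus)
  fix \<phi> assume "\<phi> \<in> CRR"
  then have "- \<phi> \<in> CRR"
    by (auto simp: CRR_def fun_Compl_def intro: continuous_on_minus)
  then show "closed (coincidence_set (uminus ` G) \<phi>)"
    by (simp add: coincidence_set_uminus closed_coincidence_set)
  obtain g where "g \<in> G" "\<forall>y\<in>coincidence_set G (- \<phi>). g y = - \<phi> y"
    using coincidence_witness[OF \<open>- \<phi> \<in> CRR\<close>] by auto
  then show "\<exists>g\<in>uminus ` G. \<forall>y\<in>coincidence_set (uminus ` G) \<phi>. g y = \<phi> y"
    by (intro bexI[of _ "- g"]) (auto simp: coincidence_set_uminus)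
qed

lemma continuous_lower_envelope: "continuous_on UNIV (lower_envelope G)"
proof -
  interpret neg: coincidence_closed "uminus ` G"
    by (rule coincidence_closed_uminus)
  show ?thesis
    unfolding lower_envelope_eq_uminus_upper_envelope[abs_def]
    by (rule continuous_on_compose2[OF continuous_uminus_ereal neg.continuous_upper_envelope]) auto
qed

lemma lower_envelope_attained:
  assumes "lower_envelope G x = ereal c"
  shows "\<exists>g\<in>G. g x = c"
proof -
  interpret neg: coincidence_closed "uminus ` G"
    by (rule coincidence_closed_uminus)
  have "upper_envelope (uminus ` G) x = ereal (- c)"
    using assms by (simp add: lower_envelope_eq_uminus_upper_envelope ereal_uminus_eq_reorder)
  then show ?thesis
    using neg.upper_envelope_attained by force
qed

lemma lower_envelope_le: "g \<in> G \<Longrightarrow> lower_envelope G x \<le> ereal (g x)"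
  unfolding lower_envelope_def by (rule INF_lower)

lemma lower_envelope_le_upper_envelope: "lower_envelope G \<le> upper_envelope G"
proof (rule le_funI)
  fix x
  obtain g where "g \<in> G"
    using nonempty by blast
  then show "lower_envelope G x \<le> upper_envelope G x"
    using lower_envelope_le upper_envelope_ge by (blast intro: order_trans)
qed

lemma envelope_values_attained:
  assumes "lower_envelope G x \<le> ereal t" "ereal t \<le> upper_envelope G x"
  shows "\<exists>g\<in>G. g x = t"
proof (cases "lower_envelope G x = ereal t \<or> upper_envelope G x = ereal t")
  case True
  then show ?thesis
    using lower_envelope_attained upper_envelope_attained by blast
next
  case False
  with assms have "lower_envelope G x < ereal t" "ereal t < upper_envelope G x"
    by auto
  then obtain g1 g2 where "g1 \<in> G" "g1 x < t" "g2 \<in> G" "t < g2 x"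
    by (auto simp: lower_envelope_def INF_less_iff less_upper_envelope_iff)
  then show ?thesis
    by (rule attains_intermediate_value)
qed

lemma eq_interval_fun_envelopes: "G = interval_fun (lower_envelope G) (upper_envelope G)"
proof (intro set_eqI iffI)
  fix g assume "g \<in> G"
  then show "g \<in> interval_fun (lower_envelope G) (upper_envelope G)"
    using continuous_members lower_envelope_le upper_envelope_ge
    by (auto simp: interval_fun_def CRR_def)
next
  fix \<phi> assume \<phi>: "\<phi> \<in> interval_fun (lower_envelope G) (upper_envelope G)"
  then have "coincidence_set G \<phi> = UNIV"
    using envelope_values_attained by (fastforce simp: interval_fun_def intro: coincidence_setI)
  moreover have "\<phi> \<in> CRR"
    using \<phi> by (simp add: interval_fun_def CRR_def)
  ultimately obtain g where "g \<in> G" "g = \<phi>"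
    using coincidence_witness by fastforce
  then show "\<phi> \<in> G"
    by simp
qed

lemma envelope_finite_if_omits_value:
  assumes "\<exists>t. \<forall>g\<in>G. g x \<noteq> t"
  shows "lower_envelope G x \<in> range ereal \<or> upper_envelope G x \<in> range ereal"
proof (rule ccontr)
  assume "\<not> ?thesis"
  moreover obtain g where "g \<in> G"
    using nonempty by blast
  ultimately have "lower_envelope G x = - \<infinity>" "upper_envelope G x = \<infinity>"
    using lower_envelope_le[of g x] upper_envelope_ge[of g x]
    by (cases "lower_envelope G x"; cases "upper_envelope G x"; simp)+
  then have "\<exists>g\<in>G. g x = t" for t
    by (intro envelope_values_attained) simp_all
  with assms show False
    by blast
qed

end

locale interval_bounds =
  fixes f h :: "real \<Rightarrow> ereal"
  assumes continuous_lower: "continuous_on UNIV f"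
    and continuous_upper: "continuous_on UNIV h"
    and lower_le_upper: "f \<le> h"
    and one_bound_finite: "f -` range ereal \<union> h -` range ereal = UNIV"
begin

lemma finite_bound_at: "f y \<in> range ereal \<or> h y \<in> range ereal"
  using one_bound_finite by (metis UNIV_I Un_iff vimage_eq)

lemma lower_neq_PInf: "f y \<noteq> \<infinity>"
  using finite_bound_at[of y] lower_le_upper[unfolded le_fun_def, rule_format, of y]
  by (cases "f y"; cases "h y") auto

lemma upper_neq_MInf: "h y \<noteq> - \<infinity>"
  using finite_bound_at[of y] lower_le_upper[unfolded le_fun_def, rule_format, of y]
  by (cases "f y"; cases "h y") auto

definition clamp :: "(real \<Rightarrow> real) \<Rightarrow> real \<Rightarrow> real" where
  "clamp \<phi> y = real_of_ereal (max (f y) (min (h y) (ereal (\<phi> y))))"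

lemma ereal_clamp: "ereal (clamp \<phi> y) = max (f y) (min (h y) (ereal (\<phi> y)))"
  using lower_neq_PInf[of y] upper_neq_MInf[of y] unfolding clamp_def
  by (cases "f y"; cases "h y") (auto simp: max_def min_def)

lemma clamp_mem_interval_fun:
  assumes "\<phi> \<in> CRR"
  shows "clamp \<phi> \<in> interval_fun f h"
proof -
  have "continuous_on UNIV (\<lambda>y. max (f y) (min (h y) (ereal (\<phi> y))))"
    using assms unfolding CRR_def
    by (intro continuous_on_max continuous_on_min continuous_lower continuous_upper
        continuous_on_ereal) auto
  then have "continuous_on UNIV (clamp \<phi>)"
    unfolding clamp_def
    by (rule continuous_on_real_of_ereal) (simp flip: ereal_clamp)
  moreover have "f y \<le> ereal (clamp \<phi> y) \<and> ereal (clamp \<phi> y) \<le> h y" for y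
    using lower_le_upper unfolding ereal_clamp by (auto simp: le_fun_def)
  ultimately show ?thesis
    by (simp add: interval_fun_def)
qed

lemma clamp_eq: "f y \<le> ereal (\<phi> y) \<Longrightarrow> ereal (\<phi> y) \<le> h y \<Longrightarrow> clamp \<phi> y = \<phi> y"
  using ereal_clamp[of \<phi> y] by simp

lemma coincidence_set_interval_fun:
  assumes "\<phi> \<in> CRR"
  shows "coincidence_set (interval_fun f h) \<phi> = {y. f y \<le> ereal (\<phi> y) \<and> ereal (\<phi> y) \<le> h y}"
proof (intro set_eqI iffI)
  fix y assume "y \<in> coincidence_set (interval_fun f h) \<phi>"
  then obtain g where "g \<in> interval_fun f h" "g y = \<phi> y"
    by (rule coincidence_setE)
  then show "y \<in> {y. f y \<le> ereal (\<phi> y) \<and> ereal (\<phi> y) \<le> h y}"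
    unfolding interval_fun_def by (metis (mono_tags) mem_Collect_eq)
next
  fix y assume "y \<in> {y. f y \<le> ereal (\<phi> y) \<and> ereal (\<phi> y) \<le> h y}"
  then show "y \<in> coincidence_set (interval_fun f h) \<phi>"
    by (intro coincidence_setI[OF clamp_mem_interval_fun[OF assms]]) (simp add: clamp_eq)
qed

lemma coincidence_closed_interval_fun: "coincidence_closed (interval_fun f h)"
proof
  show "interval_fun f h \<subseteq> CRR"
    by (auto simp: interval_fun_def CRR_def)
  fix \<phi> assume \<phi>: "\<phi> \<in> CRR"
  then show "closed (coincidence_set (interval_fun f h) \<phi>)"
    unfolding coincidence_set_interval_fun[OF \<phi>] CRR_def
    by (intro closed_Collect_conj closed_Collect_le continuous_lower continuous_upper
        continuous_on_ereal) auto
  show "\<exists>g\<in>interval_fun f h. \<forall>y\<in>coincidence_set (interval_fun f h) \<phi>. g y = \<phi> y"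
    using clamp_mem_interval_fun[OF \<phi>] clamp_eq
    by (auto simp: coincidence_set_interval_fun[OF \<phi>])
qed

lemma exists_outside_bounds: "\<exists>t. \<not> (f x \<le> ereal t \<and> ereal t \<le> h x)"
proof (cases "h x")
  case (real r)
  then show ?thesis
    by (intro exI[of _ "r + 1"]) simp
next
  case PInf
  with finite_bound_at[of x] obtain r where "f x = ereal r"
    by (cases "f x") auto
  then show ?thesis
    by (intro exI[of _ "r - 1"]) simp
next
  case MInf
  then show ?thesis
    using upper_neq_MInf by simp
qed

lemma coincidence_sets_separate_points:
  assumes "closed E" "x \<notin> E"
  shows "\<exists>\<phi>\<in>CRR. E \<subseteq> coincidence_set (interval_fun f h) \<phi> \<and>
    x \<notin> coincidence_set (interval_fun f h) \<phi>"
proof -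
  define g0 where "g0 = clamp (\<lambda>_. 0)"
  have g0: "g0 \<in> interval_fun f h"
    unfolding g0_def by (rule clamp_mem_interval_fun) (simp add: CRR_def)
  obtain t where t: "\<not> (f x \<le> ereal t \<and> ereal t \<le> h x)"
    using exists_outside_bounds by blast
  obtain u :: "real \<Rightarrow> real" where u: "continuous_on UNIV u" "\<And>y. y \<in> E \<Longrightarrow> u y = 0" "u x = 1"
    by (rule Urysohn[of E "{x}" 0 1]) (use assms in auto)
  define \<phi> where "\<phi> y = g0 y + u y * (t - g0 x)" for y
  have \<phi>: "\<phi> \<in> CRR"
    using g0 u(1) unfolding \<phi>_def CRR_def interval_fun_def by (auto intro!: continuous_intros)
  have "E \<subseteq> coincidence_set (interval_fun f h) \<phi>"
    using coincidence_setI[OF g0] u(2) by (auto simp: \<phi>_def)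
  moreover have "x \<notin> coincidence_set (interval_fun f h) \<phi>"
    using t u(3) by (simp add: coincidence_set_interval_fun[OF \<phi>] \<phi>_def)
  ultimately show ?thesis
    using \<phi> by blast
qed

lemma K_of_interval_fun: "K_of (interval_fun f h) = {CL E | E. E \<in> CL UNIV}"
  by (rule coincidence_closed.K_of_eq_closed_sets[OF coincidence_closed_interval_fun])
    (rule coincidence_sets_separate_points)

end

theorem corollary3p4:
  fixes G :: "(real \<Rightarrow> real) set"
  assumes "G \<subseteq> CRR"
  shows "K_of G = {CL E | E. E \<in> CL UNIV} \<longleftrightarrow>
    (\<exists>f h :: real \<Rightarrow> ereal. continuous_on UNIV f \<and> continuous_on UNIV h \<and> f \<le> h \<and>
       f -` (range ereal) \<union> h -` (range ereal) = UNIV \<and> G = interval_fun f h)"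
proof
  assume K: "K_of G = {CL E | E. E \<in> CL UNIV}"
  interpret coincidence_closed G
    using assms K by (rule coincidence_closed_if_K_of_eq)
  have "lower_envelope G -` range ereal \<union> upper_envelope G -` range ereal = UNIV"
    using envelope_finite_if_omits_value[OF K_of_eq_omits_value[OF K]] by auto
  then show "\<exists>f h. continuous_on UNIV f \<and> continuous_on UNIV h \<and> f \<le> h \<and>
      f -` range ereal \<union> h -` range ereal = UNIV \<and> G = interval_fun f h"
    by (intro exI[of _ "lower_envelope G"] exI[of _ "upper_envelope G"] conjI
        continuous_lower_envelope continuous_upper_envelope lower_envelope_le_upper_envelope
        eq_interval_fun_envelopes)
next
  assume "\<exists>f h. continuous_on UNIV f \<and> continuous_on UNIV h \<and> f \<le> h \<and>
      f -` range ereal \<union> h -` range ereal = UNIV \<and> G = interval_fun f h"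
  then obtain f h where bounds: "continuous_on UNIV f" "continuous_on UNIV h" "f \<le> h"
      "f -` range ereal \<union> h -` range ereal = UNIV" and G: "G = interval_fun f h"
    by blast
  interpret interval_bounds f h
    using bounds by unfold_locales
  show "K_of G = {CL E | E. E \<in> CL UNIV}"
    unfolding G by (rule K_of_interval_fun)
qed

end
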